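(* Let $G$ be the threshold graph given by the binary sequence $(1^{p_l},0^{z_l},1^{p_{l-1}},0^{z_{l-1}},\dots,1^{p_1},0^{z_1},1^{p_0},\star)$, where $l\ge0$, $z_1,\dots,z_l$ are positive integers and $p_0,\dots,p_l$ are nonnegative integers. Then the number of pairwise non-isomorphic transitive orientations of $G$ is $\prod_{i=1}^{l}(p_i+1)$.
   Context: A binary sequence $(s_1,\dots,s_{n-1},\star)$ with $s_i\in\{0,1\}$ determines an undirected graph read right to left: start with one vertex (for $\star$), then for $i=n-1,\dots,1$ add a vertex $v_i$ which is isolated if $s_i=0$ and adjacent to all previously added vertices if $s_i=1$; $x^k$ denotes $k$ consecutive copies of $x$. Graphs arising this way are exactly the threshold graphs. A transitive orientation of $G$ is an assignment of a direction to each edge such that $x\to y$, $y\to z$ imply $x\to z$; two orientations are isomorphic if there is a digraph isomorphism between them. *)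

theory Defs
  imports Main
begin

text \<open>A binary sequence (s_1,...,s_{n-1},star) is represented by the list
  s = [s_1,...,s_{n-1}] of booleans (True = 1, False = 0). The vertices are
  0,...,n-1 where vertex k < n-1 is v_{k+1} and vertex n-1 is the star vertex.
  Reading right to left, v_i is joined to all v_j with j > i iff s_i = 1.\<close>

definition thr_vertices :: "bool list \<Rightarrow> nat set" where
  "thr_vertices s = {..<Suc (length s)}"

definition thr_adj :: "bool list \<Rightarrow> nat \<Rightarrow> nat \<Rightarrow> bool" where
  "thr_adj s a b \<longleftrightarrow> a \<noteq> b \<and> a \<in> thr_vertices s \<and> b \<in> thr_vertices s \<and> s ! (min a b)"

fun blocks :: "nat \<Rightarrow> (nat \<Rightarrow> nat) \<Rightarrow> (nat \<Rightarrow> nat) \<Rightarrow> bool list" where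
  "blocks 0 p z = replicate (p 0) True"
| "blocks (Suc i) p z = replicate (p (Suc i)) True @ replicate (z (Suc i)) False @ blocks i p z"

definition transitive_orientation :: "'a set \<Rightarrow> ('a \<Rightarrow> 'a \<Rightarrow> bool) \<Rightarrow> ('a \<times> 'a) set \<Rightarrow> bool" where
  "transitive_orientation V E R \<longleftrightarrow>
     (\<forall>(x,y)\<in>R. x \<in> V \<and> y \<in> V \<and> E x y) \<and>
     (\<forall>x\<in>V. \<forall>y\<in>V. E x y \<longrightarrow> ((x,y) \<in> R \<longleftrightarrow> (y,x) \<notin> R)) \<and>
     trans R"

definition digraph_iso :: "'a set \<Rightarrow> ('a \<times> 'a) set \<Rightarrow> ('a \<times> 'a) set \<Rightarrow> bool" where
  "digraph_iso V R1 R2 \<longleftrightarrow>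
     (\<exists>f. bij_betw f V V \<and> (\<forall>x\<in>V. \<forall>y\<in>V. (x,y) \<in> R1 \<longleftrightarrow> (f x, f y) \<in> R2))"

definition trans_orients :: "'a set \<Rightarrow> ('a \<Rightarrow> 'a \<Rightarrow> bool) \<Rightarrow> ('a \<times> 'a) set set" where
  "trans_orients V E = {R. transitive_orientation V E R}"

definition num_noniso_TO :: "'a set \<Rightarrow> ('a \<Rightarrow> 'a \<Rightarrow> bool) \<Rightarrow> nat" where
  "num_noniso_TO V E =
     card (trans_orients V E // {(R1,R2). R1 \<in> trans_orients V E \<and> R2 \<in> trans_orients V E \<and> digraph_iso V R1 R2})"

end

theory Submission
  imports Defs "HOL-Library.FuncSet"
begin

text \<open>Give every vertex a level: 2k+1 in the k-th block of ones, 2k in the k-th block of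
  zeros, 0 for the star; two vertices are adjacent iff the larger level is odd. The odd-level
  vertices and the star form a clique, the other vertices are pairwise non-adjacent. In a
  transitive orientation, whether a clique vertex c points to the star decides the direction of
  all edges from c to vertices of smaller even level, and the clique is ordered by the key
  +/-(block of c), negative iff c points to the star. Hence an orientation is determined up to
  isomorphism by its profile, the number of vertices of each block 1..l of ones that point to the
  star. Every profile occurs (sort the clique lexicographically by key), and isomorphic
  orientations have the same profile: even-level vertices are recognised by their degree, so an
  isomorphism preserves their neighbourhoods, and their in-degrees give the profile. There are
  (p_1 + 1)...(p_l + 1) profiles.\<close>

lemma transitive_orientation_edgeD:
  "transitive_orientation V E R \<Longrightarrow> (x, y) \<in> R \<Longrightarrow> x \<in> V \<and> y \<in> V \<and> E x y"
  unfolding transitive_orientation_def by blast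

lemma transitive_orientation_exclusive:
  "transitive_orientation V E R \<Longrightarrow> x \<in> V \<Longrightarrow> y \<in> V \<Longrightarrow> E x y \<Longrightarrow>
    (x, y) \<in> R \<longleftrightarrow> (y, x) \<notin> R"
  unfolding transitive_orientation_def by blast

lemma transitive_orientation_trans:
  "transitive_orientation V E R \<Longrightarrow> (x, y) \<in> R \<Longrightarrow> (y, z) \<in> R \<Longrightarrow> (x, z) \<in> R"
  unfolding transitive_orientation_def trans_def by blast

lemma transitive_orientation_adjacent_iff:
  assumes "transitive_orientation V E R" "symp E" "x \<in> V" "y \<in> V"
  shows "E x y \<longleftrightarrow> (x, y) \<in> R \<or> (y, x) \<in> R"
  using assms transitive_orientation_edgeD[OF assms(1)] transitive_orientation_exclusive[OF assms(1)]
  by (blast dest: sympD)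

lemma card_filter_bij_betw:
  assumes "bij_betw f A A" and "\<And>u. u \<in> A \<Longrightarrow> Q (f u) \<longleftrightarrow> P u"
  shows "card {u \<in> A. Q u} = card {u \<in> A. P u}"
proof -
  have "f ` {u \<in> A. P u} = {u \<in> A. Q u}"
  proof
    show "{u \<in> A. Q u} \<subseteq> f ` {u \<in> A. P u}"
    proof
      fix v assume "v \<in> {u \<in> A. Q u}"
      moreover obtain u where "u \<in> A" "v = f u"
        using \<open>v \<in> {u \<in> A. Q u}\<close> assms(1) unfolding bij_betw_def by auto
      ultimately show "v \<in> f ` {u \<in> A. P u}" using assms(2) by auto
    qed
  qed (use assms in \<open>auto simp: bij_betw_def\<close>)
  moreover have "inj_on f {u \<in> A. P u}"
    using assms(1) unfolding bij_betw_def by (auto intro: inj_on_subset)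
  ultimately show ?thesis by (metis card_image)
qed

lemma digraph_iso_preserves_adjacency:
  assumes R1: "transitive_orientation V E R1" and R2: "transitive_orientation V E R2"
    and "symp E" and f: "\<And>x y. x \<in> V \<Longrightarrow> y \<in> V \<Longrightarrow> (x, y) \<in> R1 \<longleftrightarrow> (f x, f y) \<in> R2"
    and "f ` V \<subseteq> V" and "x \<in> V" "y \<in> V"
  shows "E (f x) (f y) \<longleftrightarrow> E x y"
proof -
  have "f x \<in> V" "f y \<in> V" using assms(5-7) by auto
  then show ?thesis
    using transitive_orientation_adjacent_iff[OF R1 \<open>symp E\<close>]
      transitive_orientation_adjacent_iff[OF R2 \<open>symp E\<close>] f assms(6,7) by auto
qed

lemma card_quotient_eq_card_image:
  assumes "r \<subseteq> A \<times> A" and "\<And>x y. x \<in> A \<Longrightarrow> y \<in> A \<Longrightarrow> (x, y) \<in> r \<longleftrightarrow> f x = f y"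
  shows "card (A // r) = card (f ` A)"
proof -
  define fibre where "fibre v = {x \<in> A. f x = v}" for v
  have "r `` {x} = fibre (f x)" if "x \<in> A" for x
    unfolding fibre_def using assms that by auto
  then have "A // r = fibre ` f ` A"
    unfolding quotient_def by auto
  moreover have "inj_on fibre (f ` A)"
    unfolding fibre_def by (rule inj_onI) blast
  ultimately show ?thesis by (simp add: card_image)
qed

section \<open>Transitive orientations of threshold graphs given by levels\<close>

locale threshold_levels =
  fixes V :: "'a::linorder set" and lev :: "'a \<Rightarrow> nat" and star :: 'a and l :: nat
    and E :: "'a \<Rightarrow> 'a \<Rightarrow> bool"
  assumes finite_V: "finite V" and star_in_V: "star \<in> V" and lev_star: "lev star = 0"
    and lev_eq_0D: "\<And>v. v \<in> V \<Longrightarrow> lev v = 0 \<Longrightarrow> v = star"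
    and lev_le: "\<And>v. v \<in> V \<Longrightarrow> lev v \<le> 2 * l + 1"
    and even_level_nonempty: "\<And>j. 1 \<le> j \<Longrightarrow> j \<le> l \<Longrightarrow> \<exists>w\<in>V. lev w = 2 * j"
    and adjacent_iff: "\<And>a b. E a b \<longleftrightarrow> a \<noteq> b \<and> a \<in> V \<and> b \<in> V \<and> odd (max (lev a) (lev b))"
begin

abbreviation TO :: "('a \<times> 'a) set \<Rightarrow> bool" where
  "TO R \<equiv> transitive_orientation V E R"

definition clique :: "'a set" where
  "clique = {v \<in> V. odd (lev v) \<or> v = star}"

definition block_of :: "'a \<Rightarrow> nat" where
  "block_of v = lev v div 2"

definition signed_block :: "'a set \<Rightarrow> 'a \<Rightarrow> int" where
  "signed_block B c = (if c \<in> B then - int (block_of c) else int (block_of c))"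

definition key :: "('a \<times> 'a) set \<Rightarrow> 'a \<Rightarrow> int" where
  "key R = signed_block {c. (c, star) \<in> R}"

lemma symp_E: "symp E"
  using adjacent_iff by (auto intro!: sympI simp: max.commute)

lemma TO_exclusive:
  assumes "TO R" "E x y" shows "(x, y) \<in> R \<longleftrightarrow> (y, x) \<notin> R"
proof -
  have "x \<in> V" "y \<in> V" using assms(2) adjacent_iff by auto
  then show ?thesis using transitive_orientation_exclusive[OF assms(1) _ _ assms(2)] by blast
qed

lemma TO_irrefl: "TO R \<Longrightarrow> (x, x) \<notin> R"
  using transitive_orientation_edgeD[of V E R] by (auto simp: adjacent_iff)

lemma finite_clique: "finite clique"
  using finite_V unfolding clique_def by auto

lemma clique_subset_V: "clique \<subseteq> V"
  unfolding clique_def by auto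

lemma star_in_clique: "star \<in> clique"
  using star_in_V unfolding clique_def by auto

lemma adjacent_in_clique: "c \<in> clique \<Longrightarrow> d \<in> clique \<Longrightarrow> c \<noteq> d \<Longrightarrow> E c d"
  unfolding clique_def adjacent_iff using lev_star by (auto simp: max_def)

lemma block_of_le: "v \<in> V \<Longrightarrow> block_of v \<le> l"
  using lev_le unfolding block_of_def by fastforce

lemma block_of_star: "block_of star = 0"
  using lev_star unfolding block_of_def by simp

lemma lev_clique:
  assumes "c \<in> clique" shows "lev c = (if c = star then 0 else 2 * block_of c + 1)"
proof (cases "c = star")
  case False
  then have "odd (lev c)" using assms unfolding clique_def by blast
  then show ?thesis using False unfolding block_of_def by (simp add: odd_two_times_div_two_succ)
qed (simp add: lev_star)

lemma lev_not_clique: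
  assumes "w \<in> V" "w \<notin> clique"
  shows "lev w = 2 * block_of w" "1 \<le> block_of w"
proof -
  have "even (lev w)" "w \<noteq> star" using assms unfolding clique_def by auto
  then show "lev w = 2 * block_of w" "1 \<le> block_of w"
    using lev_eq_0D[OF assms(1)] unfolding block_of_def by presburger+
qed

lemma oriented_down_iff_to_star:
  assumes R: "TO R" and c: "c \<in> V" "odd (lev c)" and w: "w \<in> V" "even (lev w)" "lev w < lev c"
  shows "(c, w) \<in> R \<longleftrightarrow> (c, star) \<in> R"
proof -
  have cw: "E c w" and cs: "E c star" and ws: "\<not> E w star" "\<not> E star w"
    using assms star_in_V lev_star unfolding adjacent_iff by (auto simp: max_def)
  show ?thesis
  proof
    assume "(c, w) \<in> R"
    moreover have "(star, w) \<notin> R" using transitive_orientation_edgeD[OF R] ws by blast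
    ultimately show "(c, star) \<in> R"
      using TO_exclusive[OF R cs] transitive_orientation_trans[OF R] by blast
  next
    assume "(c, star) \<in> R"
    moreover have "(w, star) \<notin> R" using transitive_orientation_edgeD[OF R] ws by blast
    ultimately show "(c, w) \<in> R"
      using TO_exclusive[OF R cw] transitive_orientation_trans[OF R] by blast
  qed
qed

lemma oriented_if_both_to_star:
  assumes R: "TO R" and c: "c \<in> clique" "(c, star) \<in> R" and d: "d \<in> clique" "(d, star) \<in> R"
    and less: "block_of d < block_of c"
  shows "(c, d) \<in> R"
proof -
  have "c \<noteq> star" "d \<noteq> star" using c d TO_irrefl[OF R] by auto
  then have lev_c: "lev c = 2 * block_of c + 1" and lev_d: "lev d = 2 * block_of d + 1"
    using c d lev_clique by auto
  obtain w where w: "w \<in> V" "lev w = 2 * block_of c"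
    using even_level_nonempty[of "block_of c"] less block_of_le c clique_subset_V by force
  have "(c, w) \<in> R"
    using oriented_down_iff_to_star[OF R _ _ w(1)] c w lev_c clique_subset_V by auto
  moreover have "\<not> E d w" using w lev_d less unfolding adjacent_iff by (auto simp: max_def)
  ultimately have "(d, c) \<notin> R"
    using transitive_orientation_edgeD[OF R] transitive_orientation_trans[OF R] by blast
  moreover have "E c d" using adjacent_in_clique[OF c(1) d(1)] less by auto
  ultimately show ?thesis using TO_exclusive[OF R] by blast
qed

lemma oriented_if_both_from_star:
  assumes R: "TO R" and c: "c \<in> clique" "(c, star) \<notin> R" and d: "d \<in> clique" "(d, star) \<notin> R"
    and less: "block_of c < block_of d"
  shows "(c, d) \<in> R"
proof -
  have "d \<noteq> star" using less lev_star unfolding block_of_def by auto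
  then have lev_d: "lev d = 2 * block_of d + 1" using d lev_clique by auto
  have lev_c: "lev c \<le> 2 * block_of c + 1" unfolding block_of_def by simp
  obtain w where w: "w \<in> V" "lev w = 2 * block_of d"
    using even_level_nonempty[of "block_of d"] less block_of_le d clique_subset_V by force
  have "E d w" using w lev_d d clique_subset_V unfolding adjacent_iff by (auto simp: max_def)
  moreover have "(d, w) \<notin> R"
    using oriented_down_iff_to_star[OF R _ _ w(1)] d w lev_d clique_subset_V by auto
  ultimately have "(w, d) \<in> R" using TO_exclusive[OF R] by blast
  moreover have "\<not> E w c" using w lev_c less unfolding adjacent_iff by (auto simp: max_def)
  ultimately have "(d, c) \<notin> R"
    using transitive_orientation_edgeD[OF R] transitive_orientation_trans[OF R] by blast
  moreover have "E c d" using adjacent_in_clique[OF c(1) d(1)] less by auto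
  ultimately show ?thesis using TO_exclusive[OF R] by blast
qed

lemma key_less_imp_oriented:
  assumes R: "TO R" and c: "c \<in> clique" and d: "d \<in> clique" and less: "key R c < key R d"
  shows "(c, d) \<in> R"
proof -
  have "c \<noteq> d" using less by auto
  then have "E c d" by (rule adjacent_in_clique[OF c d])
  consider "(c, star) \<in> R" "(d, star) \<in> R" | "(c, star) \<notin> R" "(d, star) \<notin> R"
    | "(c, star) \<in> R" "(d, star) \<notin> R" | "(c, star) \<notin> R" "(d, star) \<in> R"
    by blast
  then show ?thesis
  proof cases
    case 1
    then show ?thesis
      using oriented_if_both_to_star[OF R c(1) _ d] less unfolding key_def signed_block_def by simp
  next
    case 2
    then show ?thesis
      using oriented_if_both_from_star[OF R c(1) _ d] less unfolding key_def signed_block_def by simp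
  next
    case 3
    show ?thesis
    proof (rule ccontr)
      assume "(c, d) \<notin> R"
      then have "(d, c) \<in> R" using TO_exclusive[OF R \<open>E c d\<close>] by blast
      then have "(d, star) \<in> R" using 3 transitive_orientation_trans[OF R] by blast
      then show False using 3 by blast
    qed
  next
    case 4 then show ?thesis using less unfolding key_def signed_block_def by simp
  qed
qed

section \<open>Orientations with the same counting function are isomorphic\<close>

definition rank :: "('a \<times> 'a) set \<Rightarrow> 'a \<Rightarrow> nat" where
  "rank R c = card {d \<in> clique. (d, c) \<in> R}"

lemma rank_less_if_oriented:
  assumes R: "TO R" and c: "c \<in> clique" and cd: "(c, d) \<in> R"
  shows "rank R c < rank R d"
  unfolding rank_def
proof (rule psubset_card_mono)
  show "finite {e \<in> clique. (e, d) \<in> R}" using finite_clique by simp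
  have "{e \<in> clique. (e, c) \<in> R} \<subseteq> {e \<in> clique. (e, d) \<in> R}"
    using transitive_orientation_trans[OF R _ cd] by blast
  moreover have "c \<in> {e \<in> clique. (e, d) \<in> R} - {e \<in> clique. (e, c) \<in> R}"
    using c cd TO_irrefl[OF R] by blast
  ultimately show "{e \<in> clique. (e, c) \<in> R} \<subset> {e \<in> clique. (e, d) \<in> R}" by blast
qed

lemma oriented_iff_rank_less:
  assumes R: "TO R" and c: "c \<in> clique" and d: "d \<in> clique"
  shows "(c, d) \<in> R \<longleftrightarrow> rank R c < rank R d"
proof (cases "c = d")
  case False
  then have "(c, d) \<in> R \<or> (d, c) \<in> R"
    using TO_exclusive[OF R adjacent_in_clique[OF c d]] by blast
  then show ?thesis using rank_less_if_oriented[OF R c, of d] rank_less_if_oriented[OF R d, of c]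
    by auto
qed (simp add: TO_irrefl[OF R])

lemma bij_betw_rank: assumes R: "TO R" shows "bij_betw (rank R) clique {..<card clique}"
proof -
  have inj: "inj_on (rank R) clique"
    by (rule inj_onI) (metis oriented_iff_rank_less[OF R] TO_exclusive[OF R] adjacent_in_clique
        less_irrefl)
  have "rank R c < card clique" if "c \<in> clique" for c
    unfolding rank_def using that finite_clique TO_irrefl[OF R]
    by (intro psubset_card_mono) auto
  then have "rank R ` clique \<subseteq> {..<card clique}" by auto
  moreover have "card (rank R ` clique) = card {..<card clique}"
    using card_image[OF inj] by simp
  ultimately have "rank R ` clique = {..<card clique}" by (intro card_subset_eq) auto
  then show ?thesis using inj unfolding bij_betw_def by blast
qed

definition count_key_le :: "('a \<times> 'a) set \<Rightarrow> int \<Rightarrow> nat" where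
  "count_key_le R k = card {d \<in> clique. key R d \<le> k}"

lemma count_key_le_mono: "k \<le> k' \<Longrightarrow> count_key_le R k \<le> count_key_le R k'"
  unfolding count_key_le_def using finite_clique by (intro card_mono) auto

lemma count_key_le_le_rank:
  assumes R: "TO R" and c: "c \<in> clique"
  shows "count_key_le R (key R c - 1) \<le> rank R c"
  unfolding count_key_le_def rank_def using finite_clique key_less_imp_oriented[OF R _ c]
  by (intro card_mono) auto

lemma rank_less_count_key_le:
  assumes R: "TO R" and c: "c \<in> clique"
  shows "rank R c < count_key_le R (key R c)"
  unfolding count_key_le_def rank_def
proof (rule psubset_card_mono)
  show "finite {d \<in> clique. key R d \<le> key R c}" using finite_clique by simp
  have "key R d \<le> key R c" if "d \<in> clique" "(d, c) \<in> R" for d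
    using key_less_imp_oriented[OF R c that(1)] TO_exclusive[OF R] transitive_orientation_edgeD[OF R] that(2)
    by (meson not_le)
  moreover have "c \<notin> {d \<in> clique. (d, c) \<in> R}" using TO_irrefl[OF R] by blast
  ultimately show "{d \<in> clique. (d, c) \<in> R} \<subset> {d \<in> clique. key R d \<le> key R c}"
    using c by blast
qed

text \<open>Along the linear order of the clique the keys are non-decreasing, so the key at each
  rank is determined by the counting function.\<close>

lemma key_eq_if_rank_eq:
  assumes R1: "TO R1" and R2: "TO R2" and counts: "\<And>k. count_key_le R1 k = count_key_le R2 k"
    and c1: "c1 \<in> clique" and c2: "c2 \<in> clique" and ranks: "rank R1 c1 = rank R2 c2"
  shows "key R1 c1 = key R2 c2"
proof -
  have "\<not> key R c < key R' c'"
    if "TO R" "TO R'" "c \<in> clique" "c' \<in> clique" "rank R c = rank R' c'"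
       "\<And>k. count_key_le R k = count_key_le R' k" for R R' c c'
  proof
    assume "key R c < key R' c'"
    then have "count_key_le R (key R c) \<le> count_key_le R (key R' c' - 1)"
      by (intro count_key_le_mono) simp
    then show False
      using that rank_less_count_key_le[of R c] count_key_le_le_rank[of R' c'] by simp
  qed
  then show ?thesis using assms by (metis linorder_neqE)
qed

lemma adjacent_clique_independent_iff:
  assumes c: "c \<in> clique" and w: "w \<in> V" "w \<notin> clique"
  shows "E c w \<longleftrightarrow> block_of w \<le> block_of c"
proof -
  have "c \<in> V" "c \<noteq> w" using c w clique_subset_V by auto
  then show ?thesis
    using lev_clique[OF c] lev_not_clique[OF w] w block_of_star unfolding adjacent_iff
    by (auto simp: max_def)
qed

lemma not_adjacent_independent:
  "w \<in> V \<Longrightarrow> w \<notin> clique \<Longrightarrow> w' \<in> V \<Longrightarrow> w' \<notin> clique \<Longrightarrow> \<not> E w w'"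
  using lev_not_clique unfolding adjacent_iff by (auto simp: max_def)

lemma oriented_to_independent_iff:
  assumes R: "TO R" and c: "c \<in> clique" and w: "w \<in> V" "w \<notin> clique"
  shows "(c, w) \<in> R \<longleftrightarrow> key R c \<le> - int (block_of w)"
proof -
  have "(c, w) \<in> R \<longleftrightarrow> block_of w \<le> block_of c \<and> (c, star) \<in> R"
  proof (cases "block_of w \<le> block_of c")
    case True
    then have "c \<noteq> star" using lev_not_clique[OF w] block_of_star by auto
    then have "lev w < lev c" "odd (lev c)"
      using True lev_clique[OF c] lev_not_clique[OF w] by auto
    then show ?thesis
      using True oriented_down_iff_to_star[OF R _ _ w(1)] c clique_subset_V lev_not_clique[OF w]
      by auto
  next
    case False
    then show ?thesis using transitive_orientation_edgeD[OF R] adjacent_clique_independent_iff[OF c w] by auto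
  qed
  also have "\<dots> \<longleftrightarrow> key R c \<le> - int (block_of w)"
    using lev_not_clique[OF w] unfolding key_def signed_block_def by auto
  finally show ?thesis .
qed

lemma oriented_from_independent_iff:
  assumes R: "TO R" and c: "c \<in> clique" and w: "w \<in> V" "w \<notin> clique"
  shows "(w, c) \<in> R \<longleftrightarrow> int (block_of w) \<le> key R c"
proof -
  have "(w, c) \<in> R \<longleftrightarrow> E c w \<and> (c, w) \<notin> R"
    using TO_exclusive[OF R] transitive_orientation_edgeD[OF R] symp_E by (blast dest: sympD)
  also have "\<dots> \<longleftrightarrow> block_of w \<le> block_of c \<and> \<not> key R c \<le> - int (block_of w)"
    using adjacent_clique_independent_iff[OF c w] oriented_to_independent_iff[OF R c w] by blast
  also have "\<dots> \<longleftrightarrow> int (block_of w) \<le> key R c"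
    using lev_not_clique[OF w] unfolding key_def signed_block_def by auto
  finally show ?thesis .
qed

text \<open>The isomorphism matches the clique vertices rank by rank and fixes the independent
  vertices.\<close>

lemma digraph_iso_if_count_key_le_eq:
  assumes R1: "TO R1" and R2: "TO R2" and counts: "\<And>k. count_key_le R1 k = count_key_le R2 k"
  shows "digraph_iso V R1 R2"
proof -
  define g where "g = inv_into clique (rank R2) \<circ> rank R1"
  define f where "f x = (if x \<in> clique then g x else x)" for x
  have g: "bij_betw g clique clique"
    unfolding g_def using bij_betw_rank[OF R1] bij_betw_inv_into[OF bij_betw_rank[OF R2]]
    by (rule bij_betw_trans)
  have rank_g: "rank R2 (g c) = rank R1 c" if "c \<in> clique" for c
  proof -
    have "rank R1 c \<in> rank R2 ` clique"
      using that bij_betw_rank[OF R1] bij_betw_rank[OF R2] unfolding bij_betw_def by auto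
    then show ?thesis unfolding g_def by (simp add: f_inv_into_f)
  qed
  have key_g: "key R2 (g c) = key R1 c" if c: "c \<in> clique" for c
    using key_eq_if_rank_eq[OF R2 R1 _ _ c rank_g[OF c]] counts g c
    unfolding bij_betw_def by auto
  have "bij_betw f V V"
  proof -
    have "bij_betw f clique clique" using g bij_betw_cong[of clique f g clique] f_def by simp
    moreover have "bij_betw f (V - clique) (V - clique)"
      using bij_betw_id bij_betw_cong[of "V - clique" f id "V - clique"] f_def by simp
    ultimately have "bij_betw f (clique \<union> (V - clique)) (clique \<union> (V - clique))"
      by (rule bij_betw_combine) blast
    then show ?thesis using clique_subset_V by (simp add: Un_absorb1)
  qed
  moreover have "(x, y) \<in> R1 \<longleftrightarrow> (f x, f y) \<in> R2" if x: "x \<in> V" and y: "y \<in> V" for x y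
  proof (cases "x \<in> clique"; cases "y \<in> clique")
    assume xc: "x \<in> clique" and yc: "y \<in> clique"
    then have gx: "g x \<in> clique" and gy: "g y \<in> clique" using g bij_betwE by blast+
    have "(x, y) \<in> R1 \<longleftrightarrow> rank R1 x < rank R1 y" by (rule oriented_iff_rank_less[OF R1 xc yc])
    also have "\<dots> \<longleftrightarrow> (g x, g y) \<in> R2"
      using oriented_iff_rank_less[OF R2 gx gy] rank_g[OF xc] rank_g[OF yc] by simp
    finally show ?thesis using xc yc unfolding f_def by simp
  next
    assume xc: "x \<in> clique" and yc: "y \<notin> clique"
    then have gx: "g x \<in> clique" using g bij_betwE by blast
    have "(x, y) \<in> R1 \<longleftrightarrow> (g x, y) \<in> R2"
      using oriented_to_independent_iff[OF R1 xc y yc] oriented_to_independent_iff[OF R2 gx y yc]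
        key_g[OF xc] by simp
    then show ?thesis using xc yc unfolding f_def by simp
  next
    assume xc: "x \<notin> clique" and yc: "y \<in> clique"
    then have gy: "g y \<in> clique" using g bij_betwE by blast
    have "(x, y) \<in> R1 \<longleftrightarrow> (x, g y) \<in> R2"
      using oriented_from_independent_iff[OF R1 yc x xc] oriented_from_independent_iff[OF R2 gy x xc]
        key_g[OF yc] by simp
    then show ?thesis using xc yc unfolding f_def by simp
  next
    assume xc: "x \<notin> clique" and yc: "y \<notin> clique"
    then have "(x, y) \<notin> R1" "(x, y) \<notin> R2"
      using not_adjacent_independent[OF x xc y yc] transitive_orientation_edgeD[OF R1]
        transitive_orientation_edgeD[OF R2] by blast+
    then show ?thesis using xc yc unfolding f_def by simp
  qed
  ultimately show ?thesis unfolding digraph_iso_def by blast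
qed

section \<open>The profile of an orientation\<close>

definition odd_level :: "nat \<Rightarrow> 'a set" where
  "odd_level j = {v \<in> V. lev v = 2 * j + 1}"

definition down_count :: "('a \<times> 'a) set \<Rightarrow> nat \<Rightarrow> nat" where
  "down_count R j = card {c \<in> odd_level j. (c, star) \<in> R}"

definition profile :: "('a \<times> 'a) set \<Rightarrow> nat \<Rightarrow> nat" where
  "profile R = restrict (down_count R) {1..l}"

lemma finite_odd_level: "finite (odd_level j)"
  using finite_V unfolding odd_level_def by simp

lemma odd_level_empty: "l < j \<Longrightarrow> odd_level j = {}"
  using lev_le unfolding odd_level_def by fastforce

lemma down_count_eq_if_profile_eq:
  assumes "profile R1 = profile R2" "1 \<le> j"
  shows "down_count R1 j = down_count R2 j"
proof (cases "j \<le> l")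
  case True
  then have "j \<in> {1..l}" using assms(2) by simp
  then show ?thesis using fun_cong[OF assms(1), of j] unfolding profile_def by simp
qed (simp add: down_count_def odd_level_empty)

lemma odd_level_iff_block_of:
  assumes "1 \<le> j" shows "d \<in> odd_level j \<longleftrightarrow> d \<in> clique \<and> block_of d = j"
proof
  assume "d \<in> clique \<and> block_of d = j"
  then show "d \<in> odd_level j"
    using assms lev_clique block_of_star clique_subset_V unfolding odd_level_def by fastforce
qed (simp add: odd_level_def clique_def block_of_def)

lemma card_key_eq:
  assumes R: "TO R"
  shows "card {d \<in> clique. key R d = k} =
    (if k < 0 then down_count R (nat (- k))
     else if k = 0 then card {d \<in> clique. block_of d = 0}
     else card (odd_level (nat k)) - down_count R (nat k))"
proof -
  consider "k < 0" | "k = 0" | "0 < k" by linarith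
  then show ?thesis
  proof cases
    case 1
    then have "{d \<in> clique. key R d = k} = {c \<in> odd_level (nat (- k)). (c, star) \<in> R}"
      using odd_level_iff_block_of[of "nat (- k)"] unfolding key_def signed_block_def by auto
    then show ?thesis using 1 unfolding down_count_def by simp
  next
    case 2
    then have "{d \<in> clique. key R d = k} = {d \<in> clique. block_of d = 0}"
      unfolding key_def signed_block_def by auto
    then show ?thesis using 2 by simp
  next
    case 3
    then have "{d \<in> clique. key R d = k}
        = odd_level (nat k) - {c \<in> odd_level (nat k). (c, star) \<in> R}"
      using odd_level_iff_block_of[of "nat k"] unfolding key_def signed_block_def by auto
    then show ?thesis using 3 finite_odd_level unfolding down_count_def
      by (simp add: card_Diff_subset)
  qed
qed

lemma count_key_le_eq_sum:
  "count_key_le R k = (\<Sum>i \<in> {- int l..k}. card {d \<in> clique. key R d = i})"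
proof -
  have "key R d \<ge> - int l" if "d \<in> clique" for d
    using that block_of_le clique_subset_V unfolding key_def signed_block_def by force
  then have "{d \<in> clique. key R d \<le> k} = (\<Union>i \<in> {- int l..k}. {d \<in> clique. key R d = i})"
    by fastforce
  then show ?thesis
    unfolding count_key_le_def using finite_clique by (auto intro: card_UN_disjoint)
qed

lemma count_key_le_eq_if_profile_eq:
  assumes "TO R1" "TO R2" "profile R1 = profile R2"
  shows "count_key_le R1 k = count_key_le R2 k"
  unfolding count_key_le_eq_sum card_key_eq[OF assms(1)] card_key_eq[OF assms(2)]
  using down_count_eq_if_profile_eq[OF assms(3)] by (intro sum.cong) auto

section \<open>Isomorphic orientations have the same profile\<close>

definition neighbours :: "'a \<Rightarrow> 'a set" where
  "neighbours v = {u \<in> V. E v u}"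

definition in_neighbours :: "('a \<times> 'a) set \<Rightarrow> 'a \<Rightarrow> 'a set" where
  "in_neighbours R v = {u \<in> V. (u, v) \<in> R}"

lemma finite_neighbours: "finite (neighbours v)"
  using finite_V unfolding neighbours_def by simp

lemma neighbours_even:
  "w \<in> V \<Longrightarrow> even (lev w) \<Longrightarrow> neighbours w = {u \<in> V. odd (lev u) \<and> lev w < lev u}"
  unfolding neighbours_def adjacent_iff by (auto simp: max_def) (metis le_neq_implies_less)

lemma in_neighbours_even:
  assumes R: "TO R" and w: "w \<in> V" "even (lev w)"
  shows "in_neighbours R w = {u \<in> neighbours w. (u, star) \<in> R}"
proof -
  have "(u, w) \<in> R \<longleftrightarrow> u \<in> neighbours w \<and> (u, star) \<in> R" if "u \<in> V" for u
  proof (cases "u \<in> neighbours w")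
    case True
    then show ?thesis using oriented_down_iff_to_star[OF R _ _ w] neighbours_even[OF w] by auto
  next
    case False
    then show ?thesis
      using transitive_orientation_edgeD[OF R] symp_E that unfolding neighbours_def
      by (blast dest: sympD)
  qed
  then show ?thesis unfolding in_neighbours_def using neighbours_def by auto
qed

text \<open>Degrees separate the vertices of even level from those of odd level: an odd vertex is
  adjacent to the star and to all other odd vertices, and also to a vertex of level 2 unless
  its own level is 1.\<close>

lemma card_neighbours_even_less_odd:
  assumes w: "w \<in> V" "even (lev w)" "2 \<le> lev w" and w': "w' \<in> V" "odd (lev w')"
  shows "card (neighbours w) < card (neighbours w')"
proof -
  define odds where "odds = {v \<in> V. odd (lev v)}"
  have finite_odds: "finite odds" using finite_V unfolding odds_def by simp
  have w'_odds: "w' \<in> odds" using w' unfolding odds_def by simp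
  have nbrs_w: "neighbours w \<subseteq> odds" using neighbours_even[OF w(1,2)] unfolding odds_def by auto
  have sub: "insert star (odds - {w'}) \<subseteq> neighbours w'"
    using w' star_in_V lev_star odd_pos[OF w'(2)] unfolding neighbours_def adjacent_iff odds_def
    by (auto simp: max_def)
  have card_sub: "card (insert star (odds - {w'})) = card odds"
    using finite_odds w'_odds lev_star card_Suc_Diff1[OF finite_odds w'_odds]
    unfolding odds_def by simp
  show ?thesis
  proof (cases "lev w' = 1")
    case True
    then have "neighbours w \<subseteq> odds - {w'}" using nbrs_w neighbours_even[OF w(1,2)] w(3) by auto
    then have "card (neighbours w) < card odds"
      using finite_odds w'_odds by (meson card_Diff1_less card_mono finite_Diff le_less_trans)
    also have "\<dots> \<le> card (neighbours w')"
      using card_mono[OF finite_neighbours sub] card_sub by simp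
    finally show ?thesis .
  next
    case False
    then have lev_w': "3 \<le> lev w'" using w'(2) by presburger
    obtain u where u: "u \<in> V" "lev u = 2"
      using even_level_nonempty[of 1] lev_le[OF w(1)] w by force
    have "insert u (insert star (odds - {w'})) \<subseteq> neighbours w'"
      using sub u lev_w' w' unfolding neighbours_def adjacent_iff by (auto simp: max_def)
    moreover have "u \<notin> insert star (odds - {w'})" using u lev_star unfolding odds_def by auto
    ultimately have "Suc (card odds) \<le> card (neighbours w')"
      using card_mono[OF finite_neighbours] card_sub finite_odds
      by (metis card_insert_disjoint finite_Diff finite_insert)
    moreover have "card (neighbours w) \<le> card odds" using card_mono[OF finite_odds nbrs_w] .
    ultimately show ?thesis by simp
  qed
qed

lemma neighbours_eq_if_card_eq:
  assumes w: "w \<in> V" "even (lev w)" "2 \<le> lev w" and w': "w' \<in> V"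
    and same_card: "card (neighbours w') = card (neighbours w)"
  shows "even (lev w') \<and> neighbours w' = neighbours w"
proof -
  have even_w': "even (lev w')"
    using card_neighbours_even_less_odd[OF w w'] same_card by auto
  have "neighbours w' \<subseteq> neighbours w \<or> neighbours w \<subseteq> neighbours w'"
    using neighbours_even[OF w(1,2)] neighbours_even[OF w' even_w'] by (cases "lev w \<le> lev w'") auto
  then have "neighbours w' = neighbours w"
    using card_subset_eq[OF finite_neighbours] same_card by metis
  then show ?thesis using even_w' by blast
qed

lemma card_in_neighbours_eq_if_iso:
  assumes R1: "TO R1" and R2: "TO R2" and iso: "digraph_iso V R1 R2"
    and w: "w \<in> V" "even (lev w)" "2 \<le> lev w"
  shows "card (in_neighbours R1 w) = card (in_neighbours R2 w)"
proof -
  obtain f where f: "bij_betw f V V"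
    and pres: "\<And>x y. x \<in> V \<Longrightarrow> y \<in> V \<Longrightarrow> (x, y) \<in> R1 \<longleftrightarrow> (f x, f y) \<in> R2"
    using iso unfolding digraph_iso_def by blast
  have fV: "f ` V \<subseteq> V" using f unfolding bij_betw_def by simp
  have fw: "f w \<in> V" using fV w(1) by blast
  have "card {u \<in> V. E (f w) u} = card {u \<in> V. E w u}"
    by (rule card_filter_bij_betw[OF f])
      (rule digraph_iso_preserves_adjacency[OF R1 R2 symp_E pres fV w(1)])
  then have "neighbours (f w) = neighbours w" "even (lev (f w))"
    using neighbours_eq_if_card_eq[OF w fw] unfolding neighbours_def by auto
  then have "in_neighbours R2 (f w) = in_neighbours R2 w"
    using in_neighbours_even[OF R2 fw] in_neighbours_even[OF R2 w(1,2)] by simp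
  moreover have "card (in_neighbours R2 (f w)) = card (in_neighbours R1 w)"
    unfolding in_neighbours_def by (rule card_filter_bij_betw[OF f]) (rule pres[OF _ w(1), symmetric])
  ultimately show ?thesis by simp
qed

definition up_count :: "('a \<times> 'a) set \<Rightarrow> nat \<Rightarrow> nat" where
  "up_count R j = card {u \<in> V. odd (lev u) \<and> 2 * j < lev u \<and> (u, star) \<in> R}"

lemma down_count_eq_diff: "down_count R j = up_count R j - up_count R (Suc j)"
proof -
  have level: "2 * j < n \<and> \<not> 2 * Suc j < n \<longleftrightarrow> n = 2 * j + 1" if "odd n" for n :: nat
    using that by presburger
  have "{c \<in> odd_level j. (c, star) \<in> R}
      = {u \<in> V. odd (lev u) \<and> 2 * j < lev u \<and> (u, star) \<in> R}
        - {u \<in> V. odd (lev u) \<and> 2 * Suc j < lev u \<and> (u, star) \<in> R}"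
    unfolding odd_level_def using level by auto
  then show ?thesis
    unfolding down_count_def up_count_def using finite_V by (auto intro: card_Diff_subset)
qed

lemma up_count_beyond:
  assumes "l \<le> j" shows "up_count R (Suc j) = 0"
proof -
  have "\<not> 2 * Suc j < lev u" if "u \<in> V" for u using lev_le[OF that] assms by simp
  then have "{u \<in> V. odd (lev u) \<and> 2 * Suc j < lev u \<and> (u, star) \<in> R} = {}" by blast
  then show ?thesis unfolding up_count_def by (metis card.empty)
qed

lemma up_count_eq_if_iso:
  assumes R1: "TO R1" and R2: "TO R2" and iso: "digraph_iso V R1 R2" and j: "1 \<le> j" "j \<le> l"
  shows "up_count R1 j = up_count R2 j"
proof -
  obtain w where w: "w \<in> V" "lev w = 2 * j" using even_level_nonempty[OF j] by blast
  have "up_count R j = card (in_neighbours R w)" if "TO R" for R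
  proof -
    have even: "even (lev w)" using w(2) by simp
    show ?thesis
      unfolding up_count_def in_neighbours_even[OF that w(1) even] neighbours_even[OF w(1) even] w(2)
      by (intro arg_cong[where f = card]) auto
  qed
  then show ?thesis using card_in_neighbours_eq_if_iso[OF R1 R2 iso w(1)] w(2) j R1 R2 by simp
qed

lemma profile_eq_if_iso:
  assumes R1: "TO R1" and R2: "TO R2" and iso: "digraph_iso V R1 R2"
  shows "profile R1 = profile R2"
proof -
  have "up_count R1 j = up_count R2 j" if "1 \<le> j" "j \<le> Suc l" for j
    using up_count_eq_if_iso[OF R1 R2 iso] up_count_beyond[of l] that by (cases "j = Suc l") auto
  then show ?thesis unfolding profile_def down_count_eq_diff by (intro restrict_ext) simp
qed

section \<open>Every profile is realised\<close>

definition canonical_orientation :: "'a set \<Rightarrow> ('a \<times> 'a) set" where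
  "canonical_orientation B = {(x, y).
      x \<in> clique \<and> y \<in> clique \<and>
        (signed_block B x < signed_block B y \<or> signed_block B x = signed_block B y \<and> x < y)
    \<or> x \<in> clique \<and> y \<in> V - clique \<and> signed_block B x \<le> - int (block_of y)
    \<or> x \<in> V - clique \<and> y \<in> clique \<and> int (block_of x) \<le> signed_block B y}"

lemma canonical_orientation_edgeD:
  assumes xy: "(x, y) \<in> canonical_orientation B"
  shows "x \<in> V \<and> y \<in> V \<and> E x y"
proof -
  consider "x \<in> clique" "y \<in> clique" "x \<noteq> y"
    | "x \<in> clique" "y \<in> V - clique" "signed_block B x \<le> - int (block_of y)"
    | "x \<in> V - clique" "y \<in> clique" "int (block_of x) \<le> signed_block B y"
    using xy unfolding canonical_orientation_def by auto
  then show ?thesis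
  proof cases
    case 1
    then show ?thesis using adjacent_in_clique clique_subset_V by blast
  next
    case 2
    then have "block_of y \<le> block_of x"
      using lev_not_clique[of y] unfolding signed_block_def by (auto split: if_splits)
    then show ?thesis using 2 adjacent_clique_independent_iff[of x y] clique_subset_V by blast
  next
    case 3
    then have "block_of x \<le> block_of y"
      using lev_not_clique[of x] unfolding signed_block_def by (auto split: if_splits)
    then show ?thesis
      using 3 adjacent_clique_independent_iff[of y x] clique_subset_V symp_E by (blast dest: sympD)
  qed
qed

lemma canonical_orientation_exclusive:
  assumes "E x y"
  shows "(x, y) \<in> canonical_orientation B \<longleftrightarrow> (y, x) \<notin> canonical_orientation B"
proof -
  have x: "x \<in> V" and y: "y \<in> V" and "x \<noteq> y" using assms adjacent_iff by auto
  consider "x \<in> clique" "y \<in> clique" | "x \<in> clique" "y \<notin> clique"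
    | "x \<notin> clique" "y \<in> clique" | "x \<notin> clique" "y \<notin> clique" by blast
  then show ?thesis
  proof cases
    case 1 then show ?thesis using \<open>x \<noteq> y\<close> unfolding canonical_orientation_def by auto
  next
    case 2
    then have "block_of y \<le> block_of x" "1 \<le> block_of y"
      using adjacent_clique_independent_iff[OF _ y] lev_not_clique[OF y] assms by auto
    then show ?thesis using 2 x y unfolding canonical_orientation_def signed_block_def by auto
  next
    case 3
    then have "block_of x \<le> block_of y" "1 \<le> block_of x"
      using adjacent_clique_independent_iff[OF _ x] lev_not_clique[OF x] assms symp_E
      by (auto dest: sympD)
    then show ?thesis using 3 x y unfolding canonical_orientation_def signed_block_def by auto
  next
    case 4 then show ?thesis using not_adjacent_independent x y assms by blast
  qed
qed

lemma trans_canonical_orientation: "trans (canonical_orientation B)"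
proof (rule transI)
  let ?s = "signed_block B"
  fix x y z
  assume xy: "(x, y) \<in> canonical_orientation B" and yz: "(y, z) \<in> canonical_orientation B"
  have pos: "1 \<le> int (block_of v)" if "v \<in> V - clique" for v
    using lev_not_clique that by force
  show "(x, z) \<in> canonical_orientation B"
  proof (cases "y \<in> clique")
    case False
    then have "x \<in> clique" "z \<in> clique" "?s x \<le> - int (block_of y)" "int (block_of y) \<le> ?s z"
      using xy yz unfolding canonical_orientation_def by auto
    moreover have "1 \<le> int (block_of y)" using pos False xy canonical_orientation_edgeD by blast
    ultimately show ?thesis unfolding canonical_orientation_def by auto
  next
    case True
    have x: "x \<in> clique \<and> (?s x < ?s y \<or> ?s x = ?s y \<and> x < y)
        \<or> x \<in> V - clique \<and> int (block_of x) \<le> ?s y"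
      using xy True unfolding canonical_orientation_def by auto
    have z: "z \<in> clique \<and> (?s y < ?s z \<or> ?s y = ?s z \<and> y < z)
        \<or> z \<in> V - clique \<and> ?s y \<le> - int (block_of z)"
      using yz True unfolding canonical_orientation_def by auto
    show ?thesis
      using x z pos[of x] pos[of z] unfolding canonical_orientation_def by auto
  qed
qed

lemma TO_canonical_orientation: "TO (canonical_orientation B)"
  unfolding transitive_orientation_def
  using canonical_orientation_edgeD canonical_orientation_exclusive trans_canonical_orientation
  by blast

lemma canonical_orientation_to_star_iff:
  assumes "c \<in> odd_level j" "1 \<le> j"
  shows "(c, star) \<in> canonical_orientation B \<longleftrightarrow> c \<in> B"
proof -
  have "c \<in> clique" "block_of c = j" using assms odd_level_iff_block_of by auto
  moreover have "c \<noteq> star" using calculation assms block_of_star by auto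
  ultimately show ?thesis
    using assms star_in_clique block_of_star
    unfolding canonical_orientation_def signed_block_def by auto
qed

lemma down_count_canonical_orientation:
  "1 \<le> j \<Longrightarrow> down_count (canonical_orientation B) j = card (B \<inter> odd_level j)"
  unfolding down_count_def using canonical_orientation_to_star_iff
  by (intro arg_cong[where f = card]) blast

lemma profile_in_PiE:
  assumes "TO R" shows "profile R \<in> (\<Pi>\<^sub>E j\<in>{1..l}. {0..card (odd_level j)})"
  unfolding profile_def down_count_def using finite_odd_level
  by (auto intro!: card_mono)

lemma profile_surj:
  assumes b: "b \<in> (\<Pi>\<^sub>E j\<in>{1..l}. {0..card (odd_level j)})"
  shows "\<exists>R. TO R \<and> profile R = b"
proof -
  have "\<exists>S. S \<subseteq> odd_level j \<and> card S = b j" if "j \<in> {1..l}" for j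
  proof -
    have "b j \<le> card (odd_level j)" using b that by auto
    then show ?thesis by (meson obtain_subset_with_card_n)
  qed
  then obtain S where S: "\<And>j. j \<in> {1..l} \<Longrightarrow> S j \<subseteq> odd_level j \<and> card (S j) = b j"
    by metis
  define B where "B = (\<Union>j\<in>{1..l}. S j)"
  have "B \<inter> odd_level j = S j" if "j \<in> {1..l}" for j
  proof
    show "S j \<subseteq> B \<inter> odd_level j" using S that unfolding B_def by auto
    show "B \<inter> odd_level j \<subseteq> S j"
    proof
      fix c assume "c \<in> B \<inter> odd_level j"
      then obtain i where "i \<in> {1..l}" "c \<in> S i" "c \<in> odd_level j" unfolding B_def by blast
      moreover from this have "c \<in> odd_level i" using S by blast
      ultimately have "i = j" unfolding odd_level_def by simp
      then show "c \<in> S j" using \<open>c \<in> S i\<close> by simp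
    qed
  qed
  then have "profile (canonical_orientation B) j = b j" for j
    using down_count_canonical_orientation[of j B] S[of j] PiE_arb[OF b, of j]
    unfolding profile_def by (cases "j \<in> {1..l}") auto
  then have "profile (canonical_orientation B) = b" ..
  then show ?thesis using TO_canonical_orientation by blast
qed

theorem num_noniso_TO_eq: "num_noniso_TO V E = (\<Prod>j=1..l. card (odd_level j) + 1)"
proof -
  define T where "T = trans_orients V E"
  have T: "R \<in> T \<longleftrightarrow> TO R" for R unfolding T_def trans_orients_def by simp
  have "digraph_iso V R1 R2 \<longleftrightarrow> profile R1 = profile R2" if "R1 \<in> T" "R2 \<in> T" for R1 R2
    using that T profile_eq_if_iso digraph_iso_if_count_key_le_eq count_key_le_eq_if_profile_eq
    by metis
  then have "num_noniso_TO V E = card (profile ` T)"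
    unfolding num_noniso_TO_def T_def[symmetric] by (intro card_quotient_eq_card_image) auto
  also have "profile ` T = (\<Pi>\<^sub>E j\<in>{1..l}. {0..card (odd_level j)})"
    using T profile_in_PiE profile_surj by blast
  finally show ?thesis by (simp add: card_PiE)
qed

end

section \<open>Levels of the block sequence\<close>

fun block_levels :: "nat \<Rightarrow> (nat \<Rightarrow> nat) \<Rightarrow> (nat \<Rightarrow> nat) \<Rightarrow> nat list" where
  "block_levels 0 p z = replicate (p 0) 1"
| "block_levels (Suc i) p z =
     replicate (p (Suc i)) (2 * i + 3) @ replicate (z (Suc i)) (2 * i + 2) @ block_levels i p z"

definition blocks_level :: "nat \<Rightarrow> (nat \<Rightarrow> nat) \<Rightarrow> (nat \<Rightarrow> nat) \<Rightarrow> nat \<Rightarrow> nat" where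
  "blocks_level l p z k = (if k < length (block_levels l p z) then block_levels l p z ! k else 0)"

lemma length_block_levels: "length (block_levels i p z) = length (blocks i p z)"
  by (induction i) auto

lemma set_block_levels: "x \<in> set (block_levels i p z) \<Longrightarrow> 1 \<le> x \<and> x \<le> 2 * i + 1"
  by (induction i) auto

lemma nth_blocks_eq_odd:
  "k < length (blocks i p z) \<Longrightarrow> blocks i p z ! k = odd (block_levels i p z ! k)"
proof (induction i arbitrary: k)
  case (Suc i)
  then show ?case using length_block_levels[of i p z] by (auto simp: nth_append)
qed simp

lemma sorted_wrt_ge_replicate: "sorted_wrt (\<ge>) (replicate n (x :: 'a :: order))"
  by (induction n) auto

lemma sorted_wrt_block_levels: "sorted_wrt (\<ge>) (block_levels i p z)"
proof (induction i)
  case 0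
  show ?case by (simp add: sorted_wrt_ge_replicate)
next
  case (Suc i)
  moreover have "\<forall>x \<in> set (block_levels i p z). x \<le> 2 * i + 1" using set_block_levels by blast
  ultimately show ?case by (auto simp: sorted_wrt_append sorted_wrt_ge_replicate)
qed

lemma count_block_levels: "j \<le> i \<Longrightarrow> count_list (block_levels i p z) (2 * j + 1) = p j"
proof (induction i)
  case 0
  then show ?case by (simp add: count_list_eq_length_filter filter_replicate)
next
  case (Suc i)
  show ?case
  proof (cases "j = Suc i")
    case True
    then have "2 * j + 1 \<notin> set (block_levels i p z)" using set_block_levels by fastforce
    then show ?thesis using True
      by (auto simp: count_list_eq_length_filter filter_replicate filter_empty_conv)
  next
    case False
    then show ?thesis using Suc by (simp add: count_list_eq_length_filter filter_replicate)
  qed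
qed

lemma even_in_block_levels:
  "\<forall>i\<in>{1..l}. z i > 0 \<Longrightarrow> j \<in> {1..l} \<Longrightarrow> 2 * j \<in> set (block_levels l p z)"
proof (induction l)
  case (Suc l)
  then show ?case by (cases "j = Suc l") auto
qed simp

lemma threshold_levels_blocks:
  assumes "\<forall>i\<in>{1..l}. z i > 0"
  shows "threshold_levels (thr_vertices (blocks l p z)) (blocks_level l p z) (length (blocks l p z)) l
    (thr_adj (blocks l p z))"
proof -
  define s where "s = blocks l p z"
  define xs where "xs = block_levels l p z"
  have len: "length xs = length s" unfolding xs_def s_def by (rule length_block_levels)
  have lev: "blocks_level l p z k = (if k < length s then xs ! k else 0)" for k
    unfolding blocks_level_def xs_def[symmetric] len ..
  have V: "thr_vertices s = {..length s}" unfolding thr_vertices_def by auto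
  have range: "1 \<le> xs ! k \<and> xs ! k \<le> 2 * l + 1" if "k < length s" for k
    using set_block_levels[of "xs ! k" l p z] len that unfolding xs_def by (metis nth_mem)
  have max_lev: "max (blocks_level l p z a) (blocks_level l p z b) = xs ! a"
    if "a < b" "b \<le> length s" for a b
    using sorted_wrt_nth_less[OF sorted_wrt_block_levels[of l p z], of a b] that len
    unfolding lev xs_def[symmetric] by (auto simp: max_def)
  have adj: "s ! min a b \<longleftrightarrow> odd (max (blocks_level l p z a) (blocks_level l p z b))"
    if "a \<noteq> b" "a \<le> length s" "b \<le> length s" for a b
    using max_lev[of a b] max_lev[of b a] nth_blocks_eq_odd[of _ l p z] that
    unfolding s_def[symmetric] xs_def[symmetric] by (cases "a < b") (auto simp: max.commute)
  show ?thesis unfolding s_def[symmetric]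
  proof
    show "finite (thr_vertices s)" "length s \<in> thr_vertices s" "blocks_level l p z (length s) = 0"
      unfolding V lev by auto
    show "v = length s" if "v \<in> thr_vertices s" "blocks_level l p z v = 0" for v
      using that range[of v] unfolding V lev by (auto split: if_splits)
    show "blocks_level l p z v \<le> 2 * l + 1" if "v \<in> thr_vertices s" for v
      using range[of v] unfolding lev by auto
    show "\<exists>w\<in>thr_vertices s. blocks_level l p z w = 2 * j" if "1 \<le> j" "j \<le> l" for j
    proof -
      have "2 * j \<in> set xs" using even_in_block_levels[OF assms] that unfolding xs_def by simp
      then show ?thesis unfolding V lev in_set_conv_nth len by force
    qed
    show "thr_adj s a b \<longleftrightarrow> a \<noteq> b \<and> a \<in> thr_vertices s \<and> b \<in> thr_vertices s
        \<and> odd (max (blocks_level l p z a) (blocks_level l p z b))" for a b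
      unfolding thr_adj_def using adj V by auto
  qed
qed

lemma card_blocks_level:
  assumes "j \<le> l"
  shows "card {k \<in> thr_vertices (blocks l p z). blocks_level l p z k = 2 * j + 1} = p j"
proof -
  define xs where "xs = block_levels l p z"
  have "{k \<in> thr_vertices (blocks l p z). blocks_level l p z k = 2 * j + 1}
      = {k. k < length xs \<and> xs ! k = 2 * j + 1}"
    unfolding thr_vertices_def blocks_level_def xs_def length_block_levels by auto
  also have "card \<dots> = count_list xs (2 * j + 1)"
    by (simp add: count_list_eq_length_filter length_filter_conv_card eq_commute)
  finally show ?thesis using count_block_levels[OF assms] unfolding xs_def by simp
qed

theorem theorem3p4:
  fixes l :: nat and p z :: "nat \<Rightarrow> nat"
  assumes "\<forall>i\<in>{1..l}. z i > 0"
  shows "num_noniso_TO (thr_vertices (blocks l p z)) (thr_adj (blocks l p z))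
           = (\<Prod>i=1..l. p i + 1)"
proof -
  interpret threshold_levels "thr_vertices (blocks l p z)" "blocks_level l p z"
    "length (blocks l p z)" l "thr_adj (blocks l p z)"
    by (rule threshold_levels_blocks[OF assms])
  have "card (odd_level j) = p j" if "j \<in> {1..l}" for j
    using card_blocks_level[of j l p z] that unfolding odd_level_def by simp
  then show ?thesis using num_noniso_TO_eq by simp
qed

end
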